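(* For all integers $n\ge1$ and real numbers $a\ge1$, $x,y\in(0,\pi)$: if $n$ is odd then $\Theta^*_{n,a}(x,y)\ge\sin(x)\sin(y)$, with equality if and only if $n=1$; if $n$ is even then $\Theta^*_{n,a}(x,y)\ge 2\sin(x)\sin(y)$, with equality if and only if $n=2$, $a=1$.
   Context: For a real number $a$ and integers $0\le m$, $\binom{m+a}{m}=\frac{(a+1)(a+2)\cdots(a+m)}{m!}$ (equal to $1$ when $m=0$). For an integer $n\ge1$, $\Theta^*_{n,a}(x,y)=\sum_{1\le j\le n,\ j\text{ odd}}\binom{n+a-j}{n-j}\frac{\sin(jx)\sin(jy)}{j}$. *)

theory Defs
  imports Complex_Main
begin

text \<open>binom m a = binom(m+a, m) = (a+1)(a+2)...(a+m)/m!  (equal to 1 when m = 0)\<close>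
definition binom_shift :: "nat \<Rightarrow> real \<Rightarrow> real" where
  "binom_shift m a = (\<Prod>i=1..m. a + real i) / fact m"

definition ThetaStar :: "nat \<Rightarrow> real \<Rightarrow> real \<Rightarrow> real \<Rightarrow> real" where
  "ThetaStar n a x y =
     (\<Sum>j\<in>{j\<in>{1..n}. odd j}. binom_shift (n - j) a * sin (real j * x) * sin (real j * y) / real j)"

end

theory Submission
  imports Defs
begin

text \<open>
  Write \<open>G\<^sub>m(x,y)\<close> for the partial sum of \<open>sin(jx) sin(jy)/j\<close> over odd \<open>j \<le> m\<close>.
  Summation by parts expresses \<open>\<Theta>\<^sup>*\<^sub>n\<^sub>,\<^sub>a\<close> as a combination of the \<open>G\<^sub>m\<close> whose
  weights are differences of consecutive binomial coefficients, all \<open>\<ge> 1\<close> when \<open>a \<ge> 1\<close>.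
  Each \<open>G\<^sub>m\<close> is nonnegative on \<open>(0,\<pi>)\<^sup>2\<close>: it equals \<open>(C\<^sub>m(x-y) - C\<^sub>m(x+y))/2\<close> for the
  odd cosine sum \<open>C\<^sub>m\<close>, which is decreasing on \<open>[0,\<pi>]\<close> because its negated derivative
  \<open>\<Sum> sin(jt)\<close> over odd \<open>j \<le> m\<close> equals \<open>(1 - cos(2kt))/(2 sin t)\<close>, \<open>k\<close> being the number of
  terms.  Hence \<open>\<Theta>\<^sup>* \<ge> G\<^sub>1 + \<dots> + G\<^sub>n\<close>, and since \<open>G\<^sub>1 = G\<^sub>2 = sin x sin y\<close> and \<open>G\<^sub>3 > 0\<close> the bounds
  are strict as soon as \<open>n \<ge> 3\<close>; the cases \<open>n = 1, 2\<close> are computed directly.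
\<close>

lemma sum_by_parts_atLeastAtMost:
  fixes c g :: "nat \<Rightarrow> 'a::comm_ring"
  shows "(\<Sum>j=1..n. c j * g j) =
    c n * (\<Sum>j=1..n. g j) + (\<Sum>j=1..<n. (c j - c (Suc j)) * (\<Sum>i=1..j. g i))"
proof (induction n)
  case 0
  then show ?case by simp
next
  case (Suc n)
  show ?case
  proof (cases "n = 0")
    case False
    then have "(\<Sum>j=1..<Suc n. (c j - c (Suc j)) * (\<Sum>i=1..j. g i)) =
        (\<Sum>j=1..<n. (c j - c (Suc j)) * (\<Sum>i=1..j. g i)) + (c n - c (Suc n)) * (\<Sum>i=1..n. g i)"
      by (simp add: sum.atLeastLessThan_Suc)
    with Suc.IH show ?thesis by (simp add: algebra_simps)
  qed simp
qed

lemma sin_treble: "sin (3 * x :: real) = 3 * sin x - 4 * sin x ^ 3"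
proof -
  have "sin (3 * x) = sin (2 * x + x)" by simp
  also have "\<dots> = 2 * sin x * cos x * cos x + ((cos x)\<^sup>2 - (sin x)\<^sup>2) * sin x"
    by (simp only: sin_add sin_double cos_double)
  also have "\<dots> = 2 * sin x * (1 - (sin x)\<^sup>2) + ((1 - (sin x)\<^sup>2) - (sin x)\<^sup>2) * sin x"
    by (simp add: power2_eq_square[symmetric] cos_squared_eq)
  also have "\<dots> = 3 * sin x - 4 * sin x ^ 3"
    by (simp add: power2_eq_square power3_eq_cube algebra_simps)
  finally show ?thesis .
qed

lemma binom_shift_Suc:
  "binom_shift (Suc k) a = binom_shift k a * (a + real (Suc k)) / real (Suc k)"
  unfolding binom_shift_def by (simp add: prod.cl_ivl_Suc field_simps)

lemma binom_shift_ge: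
  assumes "a \<ge> 1"
  shows "binom_shift k a \<ge> real k + 1"
proof (induction k)
  case 0
  then show ?case by (simp add: binom_shift_def)
next
  case (Suc k)
  have "(real k + 2) * real (Suc k) \<le> (real k + 1) * (a + real (Suc k))"
    using assms mult_left_mono[OF assms, of "real k"] by (simp add: algebra_simps)
  also have "\<dots> \<le> binom_shift k a * (a + real (Suc k))"
    using Suc.IH assms by (intro mult_right_mono) auto
  finally show ?case
    unfolding binom_shift_Suc by (simp add: field_simps)
qed

lemma binom_shift_Suc_diff_ge:
  assumes "a \<ge> 1"
  shows "binom_shift (Suc k) a - binom_shift k a \<ge> 1"
proof -
  have "real (Suc k) * 1 \<le> binom_shift k a * a"
    using binom_shift_ge[OF assms, of k] assms by (intro mult_mono) auto
  also have "binom_shift k a * a = real (Suc k) * (binom_shift (Suc k) a - binom_shift k a)"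
    unfolding binom_shift_Suc by (simp add: field_simps)
  finally show ?thesis by simp
qed

definition odd_sin_sum :: "nat \<Rightarrow> real \<Rightarrow> real" where
  "odd_sin_sum m t = (\<Sum>j=1..m. if odd j then sin (real j * t) else 0)"

definition odd_cos_sum :: "nat \<Rightarrow> real \<Rightarrow> real" where
  "odd_cos_sum m t = (\<Sum>j=1..m. if odd j then cos (real j * t) / real j else 0)"

lemma sin_mult_odd_sin_sum:
  "2 * sin t * odd_sin_sum m t = 1 - cos (2 * real ((m + 1) div 2) * t)"
proof (induction m)
  case 0
  then show ?case by (simp add: odd_sin_sum_def)
next
  case (Suc m)
  show ?case
  proof (cases "even m")
    case True
    then have k: "real ((Suc m + 1) div 2) * 2 = real m + 2" "real ((m + 1) div 2) * 2 = real m"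
      by (auto elim!: evenE)
    have "2 * sin t * odd_sin_sum (Suc m) t =
        2 * sin t * odd_sin_sum m t + 2 * sin t * sin (real (Suc m) * t)"
      using True by (simp add: odd_sin_sum_def algebra_simps)
    also have "2 * sin t * sin (real (Suc m) * t) = cos (real m * t) - cos ((real m + 2) * t)"
    proof -
      have "t - real (Suc m) * t = - (real m * t)" "t + real (Suc m) * t = (real m + 2) * t"
        by (simp_all add: algebra_simps)
      then show ?thesis by (simp add: mult.assoc sin_times_sin)
    qed
    finally show ?thesis
      using Suc.IH k by (simp add: mult.commute mult.left_commute add.commute)
  next
    case False
    then have "(Suc m + 1) div 2 = (m + 1) div 2" by (auto elim!: oddE)
    moreover have "odd_sin_sum (Suc m) t = odd_sin_sum m t"
      using False by (simp add: odd_sin_sum_def)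
    ultimately show ?thesis using Suc.IH by simp
  qed
qed

lemma odd_sin_sum_nonneg:
  assumes "0 \<le> t" "t \<le> pi"
  shows "odd_sin_sum m t \<ge> 0"
proof (cases "t = 0 \<or> t = pi")
  case True
  then have "sin (real j * t) = 0" for j
    by (auto simp: sin_npi)
  then show ?thesis unfolding odd_sin_sum_def by (intro sum_nonneg) simp
next
  case False
  then have "sin t > 0" using assms by (intro sin_gt_zero) auto
  moreover have "2 * sin t * odd_sin_sum m t \<ge> 0"
    unfolding sin_mult_odd_sin_sum by simp
  ultimately show ?thesis by (simp add: zero_le_mult_iff)
qed

lemma has_real_derivative_odd_cos_sum:
  "(odd_cos_sum m has_real_derivative - odd_sin_sum m t) (at t)"
proof -
  have "((\<lambda>t. \<Sum>j=1..m. if odd j then cos (real j * t) / real j else 0) has_real_derivative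
      (\<Sum>j=1..m. if odd j then - sin (real j * t) * real j / real j else 0)) (at t)"
    by (intro DERIV_sum) (auto intro!: derivative_eq_intros)
  also have "(\<Sum>j=1..m. if odd j then - sin (real j * t) * real j / real j else 0) =
      - odd_sin_sum m t"
    unfolding odd_sin_sum_def sum_negf[symmetric] by (rule sum.cong) auto
  finally show ?thesis unfolding odd_cos_sum_def .
qed

lemma odd_cos_sum_antimono:
  assumes "0 \<le> s" "s \<le> t" "t \<le> pi"
  shows "odd_cos_sum m t \<le> odd_cos_sum m s"
  using assms
  by (intro DERIV_nonpos_imp_nonincreasing[of s t])
    (auto intro!: exI has_real_derivative_odd_cos_sum odd_sin_sum_nonneg)

lemma odd_cos_sum_minus: "odd_cos_sum m (- t) = odd_cos_sum m t"
  unfolding odd_cos_sum_def by (intro sum.cong) simp_all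

lemma odd_cos_sum_two_pi_minus: "odd_cos_sum m (2 * pi - t) = odd_cos_sum m t"
proof -
  have "cos (real j * (2 * pi - t)) = cos (real j * t)" for j :: nat
  proof -
    have "real j * (2 * pi - t) = 2 * pi * real_of_int (int j) - real j * t"
      by (simp add: algebra_simps)
    then show ?thesis by (simp only: cos_diff cos_int_2pin sin_int_2pin)
  qed
  then show ?thesis unfolding odd_cos_sum_def by (intro sum.cong) simp_all
qed

definition odd_sin_sin_sum :: "nat \<Rightarrow> real \<Rightarrow> real \<Rightarrow> real" where
  "odd_sin_sin_sum m x y =
     (\<Sum>j=1..m. if odd j then sin (real j * x) * sin (real j * y) / real j else 0)"

lemma odd_sin_sin_sum_eq_odd_cos_sum:
  "odd_sin_sin_sum m x y = (odd_cos_sum m (x - y) - odd_cos_sum m (x + y)) / 2"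
proof -
  have "sin (real j * x) * sin (real j * y) =
      (cos (real j * (x - y)) - cos (real j * (x + y))) / 2" for j :: nat
    by (simp add: sin_times_sin algebra_simps)
  then show ?thesis
    unfolding odd_sin_sin_sum_def odd_cos_sum_def sum_subtractf[symmetric] sum_divide_distrib
    by (intro sum.cong) (auto simp: field_simps)
qed

lemma odd_sin_sin_sum_nonneg:
  assumes "0 < x" "x < pi" "0 < y" "y < pi"
  shows "odd_sin_sin_sum m x y \<ge> 0"
proof -
  define u where "u = \<bar>x - y\<bar>"
  have cos_diff_eq: "odd_cos_sum m (x - y) = odd_cos_sum m u"
    using odd_cos_sum_minus[of m "x - y"] by (simp add: u_def abs_if)
  have u: "0 \<le> u" "u \<le> x + y" "u \<le> 2 * pi - (x + y)"
    using assms by (auto simp: u_def)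
  have "odd_cos_sum m (x + y) \<le> odd_cos_sum m u"
  proof (cases "x + y \<le> pi")
    case True
    then show ?thesis using u by (intro odd_cos_sum_antimono) auto
  next
    case False
    have "odd_cos_sum m (x + y) = odd_cos_sum m (2 * pi - (x + y))"
      by (simp add: odd_cos_sum_two_pi_minus)
    also have "\<dots> \<le> odd_cos_sum m u"
      using u False by (intro odd_cos_sum_antimono) auto
    finally show ?thesis .
  qed
  then show ?thesis
    unfolding odd_sin_sin_sum_eq_odd_cos_sum cos_diff_eq by simp
qed

lemma odd_sin_sin_sum_1: "odd_sin_sin_sum 1 x y = sin x * sin y"
  by (simp add: odd_sin_sin_sum_def)

lemma odd_sin_sin_sum_2: "odd_sin_sin_sum 2 x y = sin x * sin y"
  by (simp add: odd_sin_sin_sum_def numeral_2_eq_2 sum.cl_ivl_Suc)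

lemma odd_sin_sin_sum_3_pos:
  assumes "0 < x" "x < pi" "0 < y" "y < pi"
  shows "odd_sin_sin_sum 3 x y > 0"
proof -
  define p q where "p = sin x" and "q = sin y"
  have p: "0 < p" "p \<le> 1" and q: "0 < q" "q \<le> 1"
    using assms by (auto simp: p_def q_def intro: sin_gt_zero)
  define A B where "A = 3 - 4 * p\<^sup>2" and "B = 3 - 4 * q\<^sup>2"
  have "-1 \<le> A" "A < 3" "-1 \<le> B" "B < 3"
    using p q power_le_one[of p 2] power_le_one[of q 2] by (auto simp: A_def B_def)
  then have "3 + A * B > 0"
    \<comment> \<open>if the product is negative, one factor lies in \<open>[-1,0)\<close> and the other in \<open>(0,3)\<close>\<close>
    by (smt (verit) minus_mult_minus mult_left_le mult_left_le_one_le mult_minus_left)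
  have "odd_sin_sin_sum 3 x y = sin x * sin y + sin (3 * x) * sin (3 * y) / 3"
    by (simp add: odd_sin_sin_sum_def numeral_3_eq_3 sum.cl_ivl_Suc)
  also have "\<dots> = p * q * (3 + A * B) / 3"
    unfolding sin_treble p_def q_def A_def B_def
    by (simp add: power2_eq_square power3_eq_cube field_simps)
  finally have "odd_sin_sin_sum 3 x y = p * q * (3 + A * B) / 3" .
  moreover have "p * q * (3 + A * B) > 0"
    using p q \<open>3 + A * B > 0\<close> by simp
  ultimately show ?thesis by simp
qed

lemma ThetaStar_eq_sum:
  "ThetaStar n a x y = (\<Sum>j=1..n. binom_shift (n - j) a *
     (if odd j then sin (real j * x) * sin (real j * y) / real j else 0))"
proof -
  have "ThetaStar n a x y = (\<Sum>j=1..n. if odd j then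
      binom_shift (n - j) a * sin (real j * x) * sin (real j * y) / real j else 0)"
    unfolding ThetaStar_def by (rule sum.inter_filter) simp
  then show ?thesis by (auto intro!: sum.cong)
qed

lemma ThetaStar_ge_sum_odd_sin_sin_sum:
  assumes "a \<ge> 1" "0 < x" "x < pi" "0 < y" "y < pi"
  shows "ThetaStar n a x y \<ge> (\<Sum>m=1..n. odd_sin_sin_sum m x y)"
proof -
  have "(\<Sum>m=1..<n. odd_sin_sin_sum m x y) \<le>
      (\<Sum>m=1..<n. (binom_shift (n - m) a - binom_shift (n - Suc m) a) * odd_sin_sin_sum m x y)"
  proof (rule sum_mono)
    fix m assume "m \<in> {1..<n}"
    then have "n - m = Suc (n - Suc m)" by auto
    then show "odd_sin_sin_sum m x y \<le>
        (binom_shift (n - m) a - binom_shift (n - Suc m) a) * odd_sin_sin_sum m x y"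
      using binom_shift_Suc_diff_ge[OF assms(1), of "n - Suc m"]
        odd_sin_sin_sum_nonneg[OF assms(2-5), of m]
      by (metis mult_1 mult_right_mono)
  qed
  then have "odd_sin_sin_sum n x y + (\<Sum>m=1..<n. odd_sin_sin_sum m x y) \<le> ThetaStar n a x y"
    unfolding ThetaStar_eq_sum sum_by_parts_atLeastAtMost odd_sin_sin_sum_def
    by (simp add: binom_shift_def)
  moreover have "odd_sin_sin_sum n x y + (\<Sum>m=1..<n. odd_sin_sin_sum m x y) =
      (\<Sum>m=1..n. odd_sin_sin_sum m x y)"
    by (cases n) (simp_all add: odd_sin_sin_sum_def atLeastLessThanSuc_atLeastAtMost[symmetric])
  ultimately show ?thesis by simp
qed

theorem theorem3p9:
  fixes n :: nat and a x y :: real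
  assumes "n \<ge> 1" and "a \<ge> 1"
    and "0 < x" and "x < pi" and "0 < y" and "y < pi"
  shows "(odd n \<longrightarrow> ThetaStar n a x y \<ge> sin x * sin y \<and>
            (ThetaStar n a x y = sin x * sin y \<longleftrightarrow> n = 1)) \<and>
         (even n \<longrightarrow> ThetaStar n a x y \<ge> 2 * sin x * sin y \<and>
            (ThetaStar n a x y = 2 * sin x * sin y \<longleftrightarrow> n = 2 \<and> a = 1))"
proof -
  have sin_pos: "sin x * sin y > 0" using assms by (simp add: sin_gt_zero)
  consider "n = 1" | "n = 2" | "n \<ge> 3" using assms(1) by linarith
  then show ?thesis
  proof cases
    case 1
    then have "ThetaStar n a x y = sin x * sin y"
      by (simp add: ThetaStar_eq_sum binom_shift_def)
    then show ?thesis using 1 by simp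
  next
    case 2
    then have "ThetaStar n a x y = (a + 1) * (sin x * sin y)"
      by (simp add: ThetaStar_eq_sum binom_shift_def numeral_2_eq_2 sum.cl_ivl_Suc algebra_simps)
    moreover have "2 * (sin x * sin y) \<le> (a + 1) * (sin x * sin y)"
      using sin_pos assms(2) by (intro mult_right_mono) auto
    ultimately show ?thesis using 2 sin_pos by (auto simp: mult.assoc)
  next
    case 3
    have "2 * (sin x * sin y) + odd_sin_sin_sum 3 x y = (\<Sum>m\<in>{1,2,3}. odd_sin_sin_sum m x y)"
      using odd_sin_sin_sum_1[of x y] odd_sin_sin_sum_2[of x y] by simp
    also have "\<dots> \<le> (\<Sum>m=1..n. odd_sin_sin_sum m x y)"
      using 3 odd_sin_sin_sum_nonneg[OF assms(3-6)] by (intro sum_mono2) auto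
    also have "\<dots> \<le> ThetaStar n a x y"
      using ThetaStar_ge_sum_odd_sin_sin_sum[OF assms(2-6)] .
    finally have "ThetaStar n a x y > 2 * (sin x * sin y)"
      using odd_sin_sin_sum_3_pos[OF assms(3-6)] by linarith
    then show ?thesis using 3 sin_pos by (auto simp: mult.assoc)
  qed
qed

end
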